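(* For every $n\ge 2$, $b^*_{1,n-1}\le c_n-\frac{c_n(1-2c_n)}{n}$.
   Context: A graph on $N$ vertices is even-degenerate if there is an ordering $v_1,\dots,v_N$ of its vertices such that for each $1\le i\le N-2$, $v_i$ has an even number of neighbours in $\{v_{i+1},\dots,v_N\}$. $c_n$ is the probability that $G(n,1/2)$ is not even-degenerate. Given fixed vertex sets $V,V'$ with $|V|=|V'|=m+s$ and $S\subseteq V\cap V'$ with $|S|=s$, a pair of random graphs $(G,G')$ is parity-linked on $S$ if it is distributed as a pair of independent $G\sim G(V,1/2)$, $G'\sim G(V',1/2)$ conditioned on the events $G[S]=G'[S]$ and $e(G)\equiv e(G')\pmod 2$. Then $b^*_{m,s}$ denotes the probability that both $G$ and $G'$ are not even-degenerate (this depends only on $m$ and $s$). *)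

theory Defs
  imports Complex_Main
begin

definition graphs_on :: "'a set \<Rightarrow> 'a set set set" where
  "graphs_on V = Pow {e. e \<subseteq> V \<and> card e = 2}"

text \<open>Even-degenerate: an ordering v_0,...,v_{N-1} of V (0-indexed) such that for each
  i with i+2 < N (i.e. 1 \<le> i+1 \<le> N-2 in 1-indexed terms), v_i has an even number of
  neighbours among the later vertices.\<close>
definition even_degenerate :: "'a set \<Rightarrow> 'a set set \<Rightarrow> bool" where
  "even_degenerate V E \<longleftrightarrow>
     (\<exists>vs. distinct vs \<and> set vs = V \<and>
        (\<forall>i. i + 2 < length vs \<longrightarrow>
           even (card {j. i < j \<and> j < length vs \<and> {vs ! i, vs ! j} \<in> E})))"

text \<open>c_n: probability that G(n,1/2) (uniform over graphs on n labelled vertices) is not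
  even-degenerate.\<close>
definition c_prob :: "nat \<Rightarrow> real" where
  "c_prob n = real (card {E \<in> graphs_on {..<n}. \<not> even_degenerate {..<n} E})
              / real (card (graphs_on {..<n}))"

definition induced :: "'a set set \<Rightarrow> 'a set \<Rightarrow> 'a set set" where
  "induced E S = {e \<in> E. e \<subseteq> S}"

text \<open>Sample space of the parity-linked pair: independent uniform graphs on V and V',
  conditioned on G[S] = G'[S] and e(G) \<equiv> e(G') mod 2 (uniform on this set).\<close>
definition parity_linked_space :: "'a set \<Rightarrow> 'a set \<Rightarrow> 'a set \<Rightarrow> ('a set set \<times> 'a set set) set" where
  "parity_linked_space V V' S =
     {(G, G'). G \<in> graphs_on V \<and> G' \<in> graphs_on V' \<and> induced G S = induced G' S
               \<and> even (card G + card G')}"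

definition b_star_prob :: "'a set \<Rightarrow> 'a set \<Rightarrow> 'a set \<Rightarrow> real" where
  "b_star_prob V V' S =
     real (card {(G, G') \<in> parity_linked_space V V' S.
                   \<not> even_degenerate V G \<and> \<not> even_degenerate V' G'})
     / real (card (parity_linked_space V V' S))"

end

theory Submission
  imports Defs
begin

text \<open>Fix the vertex set V, |V| = n, and let N = 2^(n choose 2) be the number of graphs on V.
  For T \<subseteq> V call two graphs on V T-linked if they differ only in pairs meeting T and have
  edge counts of the same parity; every T-linked class has 2^(m_T - 1) members, where m_T is
  the number of pairs meeting T. Let X(T) (escape_weight V T) be the number of T-linked pairs
  (G, K) with G not even-degenerate and K even-degenerate, divided by this class size.
  Every (T \<union> {w})-linked pair (G, K) is joined by at least 2^(|T| - 1) paths G \<rightarrow> H \<rightarrow> K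
  made of a T-linked and a {w}-linked step, and one of the two steps of such a path leaves
  the non-even-degenerate graphs; this gives X(T \<union> {w}) \<le> X(T) + X({w}) and hence X(V) \<le> \<Sum>w X({w}).
  For a single vertex w the {w}-linked pairs are exactly the parity-linked pairs on
  S = V - {w}, so X({w}) = N (c_n - b*). V-linked graphs only share their parity, so at most a
  fraction 2 c_n of a class is not even-degenerate and X(V) \<ge> N c_n (1 - 2 c_n).
  Comparing gives n (c_n - b*) \<ge> c_n (1 - 2 c_n).\<close>

definition all_edges :: "'a set \<Rightarrow> 'a set set" where
  "all_edges V = {e. e \<subseteq> V \<and> card e = 2}"

lemma graphs_on_eq_Pow: "graphs_on V = Pow (all_edges V)"
  by (simp add: graphs_on_def all_edges_def)

lemma finite_all_edges: "finite V \<Longrightarrow> finite (all_edges V)"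
  unfolding all_edges_def by (rule finite_subset[of _ "Pow V"]) auto

lemma finite_graphs_on: "finite V \<Longrightarrow> finite (graphs_on V)"
  by (simp add: graphs_on_eq_Pow finite_all_edges)

lemma graphs_onD: "E \<in> graphs_on V \<Longrightarrow> e \<in> E \<Longrightarrow> e \<subseteq> V \<and> card e = 2"
  by (auto simp: graphs_on_def)

lemma card_subsets_parity:
  assumes "finite A" "a \<in> A"
  shows "card {Y. Y \<subseteq> A \<and> even (card Y + k)} = 2 ^ (card A - 1)"
proof -
  have fin: "finite Y" if "Y \<subseteq> A" for Y using assms(1) that finite_subset by blast
  \<comment> \<open>toggling a fixes the parity\<close>
  let ?toggle = "\<lambda>Z. if even (card Z + k) then Z else insert a Z"
  have "bij_betw (\<lambda>Y. Y - {a}) {Y. Y \<subseteq> A \<and> even (card Y + k)} (Pow (A - {a}))"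
  proof (rule bij_betw_byWitness[where f' = ?toggle])
    show "\<forall>Y\<in>{Y. Y \<subseteq> A \<and> even (card Y + k)}. ?toggle (Y - {a}) = Y"
    proof
      fix Y assume Y: "Y \<in> {Y. Y \<subseteq> A \<and> even (card Y + k)}"
      show "?toggle (Y - {a}) = Y"
      proof (cases "a \<in> Y")
        case True
        have "card Y = Suc (card (Y - {a}))" using True Y fin by (intro card.remove) auto
        then have "odd (card (Y - {a}) + k)" using Y by auto
        then show ?thesis using True by auto
      next
        case False
        then show ?thesis using Y by auto
      qed
    qed
    show "\<forall>Z\<in>Pow (A - {a}). ?toggle Z - {a} = Z" by auto
    show "(\<lambda>Y. Y - {a}) ` {Y. Y \<subseteq> A \<and> even (card Y + k)} \<subseteq> Pow (A - {a})" by auto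
    show "?toggle ` Pow (A - {a}) \<subseteq> {Y. Y \<subseteq> A \<and> even (card Y + k)}"
    proof
      fix Y assume "Y \<in> ?toggle ` Pow (A - {a})"
      then obtain Z where Z: "Z \<subseteq> A - {a}" "Y = ?toggle Z" by blast
      have "finite Z" "a \<notin> Z" using Z fin by blast+
      then show "Y \<in> {Y. Y \<subseteq> A \<and> even (card Y + k)}" using Z assms(2) by (auto simp: card_insert_if)
    qed
  qed
  then have "card {Y. Y \<subseteq> A \<and> even (card Y + k)} = card (Pow (A - {a}))"
    by (rule bij_betw_same_card)
  also have "\<dots> = 2 ^ (card A - 1)" using assms by (simp add: card_Pow)
  finally show ?thesis .
qed

lemma card_eq_sum_card_fibres:
  assumes "finite B" "finite P" "f ` B \<subseteq> P"
  shows "card B = (\<Sum>p\<in>P. card {b \<in> B. f b = p})"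
  unfolding card_eq_sum by (rule sum.group[symmetric, OF assms])

lemma card_ge_by_fibres:
  assumes "finite B" "finite P" "\<And>p. p \<in> P \<Longrightarrow> card {b \<in> B. f b = p} \<ge> m"
  shows "card B \<ge> card P * m"
proof -
  let ?B = "{b \<in> B. f b \<in> P}"
  have "card P * m \<le> (\<Sum>p\<in>P. card {b \<in> B. f b = p})"
    using sum_mono[of P "\<lambda>_. m", OF assms(3)] by simp
  also have "\<dots> = (\<Sum>p\<in>P. card {b \<in> ?B. f b = p})" by (intro sum.cong refl arg_cong[where f = card]) auto
  also have "\<dots> = card ?B" using assms(1,2) by (intro card_eq_sum_card_fibres[symmetric]) auto
  also have "\<dots> \<le> card B" using assms(1) by (intro card_mono) auto
  finally show ?thesis .
qed

lemma card_eq_by_fibres: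
  assumes "finite B" "finite P" "f ` B \<subseteq> P" "\<And>p. p \<in> P \<Longrightarrow> card {b \<in> B. f b = p} = m"
  shows "card B = card P * m"
  using card_eq_sum_card_fibres[OF assms(1-3)] assms(4) by simp

lemma card_Pair_image: "card (Pair x ` A) = card A"
  by (rule card_image) (simp add: inj_on_def)


subsection \<open>Relabelling vertices\<close>

definition relabel :: "('a \<Rightarrow> 'b) \<Rightarrow> 'a set set \<Rightarrow> 'b set set" where
  "relabel f E = (\<lambda>e. f ` e) ` E"

lemma relabel_in_graphs_on:
  assumes "inj_on f V" "f ` V \<subseteq> W" "E \<in> graphs_on V"
  shows "relabel f E \<in> graphs_on W"
proof -
  have "f ` e \<subseteq> W \<and> card (f ` e) = 2" if "e \<in> E" for e
  proof -
    have e: "e \<subseteq> V" "card e = 2" using graphs_onD[OF assms(3) that] by auto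
    then have "card (f ` e) = card e" using assms(1) by (meson card_image inj_on_subset)
    then show ?thesis using e assms(2) by auto
  qed
  then show ?thesis by (auto simp: graphs_on_def relabel_def)
qed

lemma relabel_inv_into_relabel:
  assumes "inj_on f V" "E \<in> graphs_on V"
  shows "relabel (inv_into V f) (relabel f E) = E"
proof -
  have "inv_into V f ` f ` e = e" if "e \<in> E" for e
    using graphs_onD[OF assms(2) that] assms(1) by (meson inv_into_image_cancel)
  then show ?thesis unfolding relabel_def image_image by simp
qed

lemma relabel_relabel_inv_into:
  assumes "f ` V = W" "E \<in> graphs_on W"
  shows "relabel f (relabel (inv_into V f) E) = E"
proof -
  have "f ` inv_into V f ` e = e" if "e \<in> E" for e
    using graphs_onD[OF assms(2) that] assms(1) by (meson image_inv_into_cancel)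
  then show ?thesis unfolding relabel_def image_image by simp
qed

lemma bij_betw_relabel:
  assumes "bij_betw f V W"
  shows "bij_betw (relabel f) (graphs_on V) (graphs_on W)"
proof (rule bij_betw_byWitness[where f' = "relabel (inv_into V f)"])
  have inj: "inj_on f V" and img: "f ` V = W" using assms by (auto simp: bij_betw_def)
  have inj': "inj_on (inv_into V f) W" and img': "inv_into V f ` W = V"
    using bij_betw_inv_into[OF assms] by (auto simp: bij_betw_def)
  show "\<forall>E\<in>graphs_on V. relabel (inv_into V f) (relabel f E) = E"
    using relabel_inv_into_relabel[OF inj] by blast
  show "\<forall>E\<in>graphs_on W. relabel f (relabel (inv_into V f) E) = E"
    using relabel_relabel_inv_into[OF img] by blast
  show "relabel f ` graphs_on V \<subseteq> graphs_on W" using relabel_in_graphs_on[OF inj] img by blast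
  show "relabel (inv_into V f) ` graphs_on W \<subseteq> graphs_on V"
    using relabel_in_graphs_on[OF inj'] img' by blast
qed

lemma relabel_mem_iff:
  assumes "inj_on f V" "E \<in> graphs_on V" "e \<subseteq> V"
  shows "f ` e \<in> relabel f E \<longleftrightarrow> e \<in> E"
proof
  assume "f ` e \<in> relabel f E"
  then obtain e' where "e' \<in> E" "f ` e = f ` e'" by (auto simp: relabel_def)
  moreover have "e' \<subseteq> V" using graphs_onD[OF assms(2) \<open>e' \<in> E\<close>] by auto
  ultimately show "e \<in> E" using assms(1,3) by (metis inj_on_image_eq_iff)
qed (auto simp: relabel_def)

lemma card_relabel:
  assumes "inj_on f V" "E \<in> graphs_on V"
  shows "card (relabel f E) = card E"
proof -
  have "inj_on (\<lambda>e. f ` e) E"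
    using assms graphs_onD[OF assms(2)] by (auto simp: inj_on_def inj_on_image_eq_iff)
  then show ?thesis by (simp add: relabel_def card_image)
qed

lemma even_degenerate_relabel:
  assumes "bij_betw f V W" "E \<in> graphs_on V" "even_degenerate V E"
  shows "even_degenerate W (relabel f E)"
proof -
  have inj: "inj_on f V" and img: "f ` V = W" using assms(1) by (auto simp: bij_betw_def)
  obtain vs where vs: "distinct vs" "set vs = V"
     "\<forall>i. i + 2 < length vs \<longrightarrow> even (card {j. i < j \<and> j < length vs \<and> {vs ! i, vs ! j} \<in> E})"
    using assms(3) unfolding even_degenerate_def by blast
  let ?ws = "map f vs"
  have "{j. i < j \<and> j < length ?ws \<and> {?ws ! i, ?ws ! j} \<in> relabel f E}
      = {j. i < j \<and> j < length vs \<and> {vs ! i, vs ! j} \<in> E}" if i: "i < length vs" for i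
  proof -
    have "{?ws ! i, ?ws ! j} \<in> relabel f E \<longleftrightarrow> {vs ! i, vs ! j} \<in> E" if j: "j < length vs" for j
      using relabel_mem_iff[OF inj assms(2), of "{vs ! i, vs ! j}"] vs(2) i j by auto
    then show ?thesis by auto
  qed
  then show ?thesis
    unfolding even_degenerate_def using vs inj img by (intro exI[of _ ?ws]) (auto simp: distinct_map)
qed

lemma even_degenerate_relabel_iff:
  assumes "bij_betw f V W" "E \<in> graphs_on V"
  shows "even_degenerate W (relabel f E) \<longleftrightarrow> even_degenerate V E"
proof
  assume "even_degenerate W (relabel f E)"
  moreover have "relabel f E \<in> graphs_on W" using bij_betw_relabel[OF assms(1)] assms(2)
    by (auto simp: bij_betw_def)
  ultimately have "even_degenerate V (relabel (inv_into V f) (relabel f E))"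
    using even_degenerate_relabel bij_betw_inv_into[OF assms(1)] by blast
  then show "even_degenerate V E" using relabel_inv_into_relabel assms by (metis bij_betw_def)
qed (rule even_degenerate_relabel[OF assms])

lemma induced_relabel:
  assumes "inj_on f V" "G \<in> graphs_on V" "S \<subseteq> V"
  shows "induced (relabel f G) (f ` S) = relabel f (induced G S)"
proof -
  have "f ` e \<subseteq> f ` S \<longleftrightarrow> e \<subseteq> S" if "e \<in> G" for e
    using graphs_onD[OF assms(2) that] inj_on_image_mem_iff[OF assms(1) _ assms(3)] by blast
  then show ?thesis by (auto simp: induced_def relabel_def)
qed

lemma relabel_cong:
  assumes "\<And>x. x \<in> S \<Longrightarrow> f x = f' x" "\<And>e. e \<in> F \<Longrightarrow> e \<subseteq> S"
  shows "relabel f F = relabel f' F"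
proof -
  have "f ` e = f' ` e" if "e \<in> F" for e using assms that by (meson image_cong subsetD)
  then show ?thesis by (simp add: relabel_def)
qed

lemma relabel_parity_linked_space:
  assumes "bij_betw f V W" "bij_betw f' V' W'" "S \<subseteq> V \<inter> V'" "\<And>x. x \<in> S \<Longrightarrow> f x = f' x"
    and "(G, G') \<in> parity_linked_space V V' S"
  shows "(relabel f G, relabel f' G') \<in> parity_linked_space W W' (f ` S)"
proof -
  have inj: "inj_on f V" "inj_on f' V'" and img: "f ` V = W" "f' ` V' = W'"
    using assms(1,2) by (auto simp: bij_betw_def)
  have G: "G \<in> graphs_on V" "G' \<in> graphs_on V'" "induced G S = induced G' S" "even (card G + card G')"
    using assms(5) by (auto simp: parity_linked_space_def)
  have "f ` S = f' ` S" using assms(4) by (intro image_cong) auto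
  then have "induced (relabel f' G') (f ` S) = relabel f' (induced G' S)"
    using induced_relabel[OF inj(2) G(2)] assms(3) by simp
  also have "\<dots> = relabel f (induced G' S)"
    by (rule relabel_cong[of S]) (auto simp: assms(4) induced_def)
  also have "\<dots> = relabel f (induced G S)" using G(3) by simp
  also have "\<dots> = induced (relabel f G) (f ` S)"
    using induced_relabel[OF inj(1) G(1)] assms(3) by simp
  finally show ?thesis
    using relabel_in_graphs_on[OF inj(1) _ G(1)] relabel_in_graphs_on[OF inj(2) _ G(2)] img G(4)
      card_relabel[OF inj(1) G(1)] card_relabel[OF inj(2) G(2)]
    by (simp add: parity_linked_space_def)
qed

lemma bij_betw_relabel_parity_linked_space:
  assumes "bij_betw f V W" "bij_betw f' V' W'" "S \<subseteq> V \<inter> V'" "\<And>x. x \<in> S \<Longrightarrow> f x = f' x"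
  shows "bij_betw (\<lambda>(G, G'). (relabel f G, relabel f' G'))
    (parity_linked_space V V' S) (parity_linked_space W W' (f ` S))"
proof -
  define g g' where "g = inv_into V f" and "g' = inv_into V' f'"
  have bij_inv: "bij_betw g W V" "bij_betw g' W' V'"
    using assms(1,2) g_def g'_def by (auto intro: bij_betw_inv_into)
  have inj: "inj_on f V" "inj_on f' V'" and img: "f ` V = W" "f' ` V' = W'"
    using assms(1,2) by (auto simp: bij_betw_def)
  have fS: "f ` S \<subseteq> W \<inter> W'"
  proof
    fix y assume "y \<in> f ` S"
    then obtain x where "x \<in> S" "y = f x" by blast
    then show "y \<in> W \<inter> W'" using assms(3) assms(4)[of x] img by blast
  qed
  have gS: "g y = g' y" if y: "y \<in> f ` S" for y
  proof -
    obtain x where x: "x \<in> S" "y = f x" using y by blast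
    moreover have "x \<in> V" "x \<in> V'" using x(1) assms(3) by auto
    ultimately have "g y = x" "g' y = x"
      using inj assms(4)[of x] g_def g'_def by (metis inv_into_f_f)+
    then show ?thesis by simp
  qed
  have gfS: "g ` f ` S = S" using inj assms(3) g_def by (simp add: inv_into_image_cancel)
  show ?thesis
  proof (rule bij_betw_byWitness[where f' = "\<lambda>(G, G'). (relabel g G, relabel g' G')"])
    show "\<forall>p\<in>parity_linked_space V V' S. (\<lambda>(G, G'). (relabel g G, relabel g' G'))
        ((\<lambda>(G, G'). (relabel f G, relabel f' G')) p) = p"
      using relabel_inv_into_relabel inj g_def g'_def by (auto simp: parity_linked_space_def)
    show "\<forall>q\<in>parity_linked_space W W' (f ` S). (\<lambda>(G, G'). (relabel f G, relabel f' G'))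
        ((\<lambda>(G, G'). (relabel g G, relabel g' G')) q) = q"
      using relabel_relabel_inv_into[OF img(1)] relabel_relabel_inv_into[OF img(2)] g_def g'_def
      by (auto simp: parity_linked_space_def)
    show "(\<lambda>(G, G'). (relabel f G, relabel f' G')) ` parity_linked_space V V' S
        \<subseteq> parity_linked_space W W' (f ` S)"
      using relabel_parity_linked_space[OF assms] by auto
    show "(\<lambda>(G, G'). (relabel g G, relabel g' G')) ` parity_linked_space W W' (f ` S)
        \<subseteq> parity_linked_space V V' S"
      using relabel_parity_linked_space[OF bij_inv fS gS] gfS by auto
  qed
qed

lemma b_star_prob_relabel:
  assumes "bij_betw f V W" "bij_betw f' V' W'" "S \<subseteq> V \<inter> V'" "\<And>x. x \<in> S \<Longrightarrow> f x = f' x"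
  shows "b_star_prob V V' S = b_star_prob W W' (f ` S)"
proof -
  let ?P = "parity_linked_space V V' S" and ?Q = "parity_linked_space W W' (f ` S)"
  let ?\<Phi> = "\<lambda>(G, G'). (relabel f G, relabel f' G')"
  note bij = bij_betw_relabel_parity_linked_space[OF assms]
  have ed_iff: "\<not> even_degenerate W (relabel f G) \<and> \<not> even_degenerate W' (relabel f' G') \<longleftrightarrow>
        \<not> even_degenerate V G \<and> \<not> even_degenerate V' G'" if "(G, G') \<in> ?P" for G G'
    using that even_degenerate_relabel_iff[OF assms(1)] even_degenerate_relabel_iff[OF assms(2)]
    by (auto simp: parity_linked_space_def)
  let ?ned = "\<lambda>U U' (G, G'). \<not> even_degenerate U G \<and> \<not> even_degenerate U' G'"
  have bij_ned: "bij_betw ?\<Phi> {p \<in> ?P. ?ned V V' p} {q \<in> ?Q. ?ned W W' q}"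
    by (rule bij_betw_Collect[OF bij]) (use ed_iff in auto)
  have ned_eq: "{(G, G') \<in> ?P. \<not> even_degenerate V G \<and> \<not> even_degenerate V' G'} = {p \<in> ?P. ?ned V V' p}"
    "{(G, G') \<in> ?Q. \<not> even_degenerate W G \<and> \<not> even_degenerate W' G'} = {q \<in> ?Q. ?ned W W' q}"
    by auto
  have "card ?P = card ?Q" by (rule bij_betw_same_card[OF bij])
  moreover have "card {p \<in> ?P. ?ned V V' p} = card {q \<in> ?Q. ?ned W W' q}"
    by (rule bij_betw_same_card[OF bij_ned])
  ultimately show ?thesis unfolding b_star_prob_def ned_eq by (simp only:)
qed

definition non_ed :: "'a set \<Rightarrow> 'a set set set" where
  "non_ed V = {E \<in> graphs_on V. \<not> even_degenerate V E}"

lemma card_non_ed_relabel: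
  assumes "bij_betw f V W"
  shows "card (non_ed V) = card (non_ed W)"
proof -
  have "bij_betw (relabel f) (non_ed V) (non_ed W)"
    unfolding non_ed_def using even_degenerate_relabel_iff[OF assms]
    by (intro bij_betw_Collect[OF bij_betw_relabel[OF assms]]) auto
  then show ?thesis by (rule bij_betw_same_card)
qed


subsection \<open>Linked pairs\<close>

definition edges_meeting :: "'a set \<Rightarrow> 'a set \<Rightarrow> 'a set set" where
  "edges_meeting V T = {e \<in> all_edges V. e \<inter> T \<noteq> {}}"

definition linked :: "'a set \<Rightarrow> 'a set \<Rightarrow> ('a set set \<times> 'a set set) set" where
  "linked V T = {(G, K). G \<in> graphs_on V \<and> K \<in> graphs_on V
     \<and> G - edges_meeting V T = K - edges_meeting V T \<and> even (card G + card K)}"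

definition linked_class_card :: "'a set \<Rightarrow> 'a set \<Rightarrow> nat" where
  "linked_class_card V T = 2 ^ (card (edges_meeting V T) - 1)"

lemma edges_meeting_subset: "edges_meeting V T \<subseteq> all_edges V"
  unfolding edges_meeting_def by blast

lemma finite_edges_meeting: "finite V \<Longrightarrow> finite (edges_meeting V T)"
  by (rule finite_subset[OF edges_meeting_subset finite_all_edges])

lemma edges_meeting_insert: "edges_meeting V (insert w T) = edges_meeting V T \<union> edges_meeting V {w}"
  by (auto simp: edges_meeting_def)

lemma edges_meeting_Int:
  assumes "T \<subseteq> V" "w \<in> V" "w \<notin> T"
  shows "edges_meeting V T \<inter> edges_meeting V {w} = (\<lambda>t. {t, w}) ` T"
proof
  show "edges_meeting V T \<inter> edges_meeting V {w} \<subseteq> (\<lambda>t. {t, w}) ` T"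
  proof
    fix e assume e: "e \<in> edges_meeting V T \<inter> edges_meeting V {w}"
    then obtain t where t: "t \<in> e" "t \<in> T" and w: "w \<in> e" and "card e = 2"
      by (auto simp: edges_meeting_def all_edges_def)
    then obtain x y where "e = {x, y}" by (meson card_2_iff)
    then have "e = {t, w}" using t w assms(3) by auto
    then show "e \<in> (\<lambda>t. {t, w}) ` T" using t by blast
  qed
  show "(\<lambda>t. {t, w}) ` T \<subseteq> edges_meeting V T \<inter> edges_meeting V {w}"
    using assms by (auto simp: edges_meeting_def all_edges_def card_insert_if)
qed

lemma card_edges_meeting_Int:
  assumes "T \<subseteq> V" "w \<in> V" "w \<notin> T"
  shows "card (edges_meeting V T \<inter> edges_meeting V {w}) = card T"
proof -
  have "inj_on (\<lambda>t. {t, w}) T" using assms(3) by (auto simp: inj_on_def doubleton_eq_iff)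
  then show ?thesis by (simp add: edges_meeting_Int[OF assms] card_image)
qed

lemma edges_meeting_nonempty:
  assumes "u \<in> V" "w \<in> V" "u \<noteq> w"
  shows "edges_meeting V {w} \<noteq> {}"
  using assms edges_meeting_Int[of "{u}" V w] by auto

lemma edges_meeting_all: "edges_meeting V V = all_edges V"
proof -
  have "e \<inter> V \<noteq> {}" if "e \<subseteq> V" "card e = 2" for e :: "'a set"
    using that by (metis card.empty inf.absorb1 zero_neq_numeral)
  then show ?thesis by (auto simp: edges_meeting_def all_edges_def)
qed

lemma linked_sym: "(G, K) \<in> linked V T \<Longrightarrow> (K, G) \<in> linked V T"
  by (simp add: linked_def add.commute)

lemma finite_linked: "finite V \<Longrightarrow> finite (linked V T)"
  by (rule finite_subset[of _ "graphs_on V \<times> graphs_on V"]) (auto simp: linked_def finite_graphs_on)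

lemma card_linked_class:
  assumes "finite V" "G \<in> graphs_on V" "edges_meeting V T \<noteq> {}"
  shows "card {K. (G, K) \<in> linked V T} = linked_class_card V T"
proof -
  let ?s = "edges_meeting V T"
  let ?k = "card G + card (G - ?s)"
  have cardsplit: "card K = card (K - ?s) + card (K \<inter> ?s)" if "K \<subseteq> all_edges V" for K
  proof -
    have "finite K" using that finite_all_edges[OF assms(1)] by (rule finite_subset)
    then show ?thesis using card_Int_Diff[of K ?s] by simp
  qed
  have G: "G \<subseteq> all_edges V" using assms(2) by (simp add: graphs_on_eq_Pow)
  \<comment> \<open>K is determined by its part inside the pairs meeting T, which is free up to parity\<close>
  have "bij_betw (\<lambda>K. K \<inter> ?s) {K. (G, K) \<in> linked V T} {Y. Y \<subseteq> ?s \<and> even (card Y + ?k)}"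
  proof (rule bij_betw_byWitness[where f' = "\<lambda>Y. (G - ?s) \<union> Y"])
    show "(\<lambda>K. K \<inter> ?s) ` {K. (G, K) \<in> linked V T} \<subseteq> {Y. Y \<subseteq> ?s \<and> even (card Y + ?k)}"
    proof
      fix Y assume "Y \<in> (\<lambda>K. K \<inter> ?s) ` {K. (G, K) \<in> linked V T}"
      then obtain K where K: "(G, K) \<in> linked V T" "Y = K \<inter> ?s" by blast
      have KE: "K \<subseteq> all_edges V" and "G - ?s = K - ?s" "even (card G + card K)"
        using K by (auto simp: linked_def graphs_on_eq_Pow)
      moreover have "card K = card (G - ?s) + card Y" using cardsplit[OF KE] calculation K(2) by simp
      ultimately have "even (card Y + ?k)" by presburger
      then show "Y \<in> {Y. Y \<subseteq> ?s \<and> even (card Y + ?k)}" using K(2) by blast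
    qed
    show "(\<lambda>Y. G - ?s \<union> Y) ` {Y. Y \<subseteq> ?s \<and> even (card Y + ?k)} \<subseteq> {K. (G, K) \<in> linked V T}"
    proof
      fix K assume "K \<in> (\<lambda>Y. G - ?s \<union> Y) ` {Y. Y \<subseteq> ?s \<and> even (card Y + ?k)}"
      then obtain Y where Y: "Y \<subseteq> ?s" "even (card Y + ?k)" "K = G - ?s \<union> Y" by blast
      have KE: "K \<subseteq> all_edges V" using Y G edges_meeting_subset by blast
      have "K - ?s = G - ?s" "K \<inter> ?s = Y" using Y by auto
      then have "card K = card (G - ?s) + card Y" using cardsplit[OF KE] by simp
      then have "even (card G + card K)" using Y(2) by presburger
      then show "K \<in> {K. (G, K) \<in> linked V T}"
        using KE G \<open>K - ?s = G - ?s\<close> by (simp add: linked_def graphs_on_eq_Pow)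
    qed
  qed (auto simp: linked_def)
  then have "card {K. (G, K) \<in> linked V T} = card {Y. Y \<subseteq> ?s \<and> even (card Y + ?k)}"
    by (rule bij_betw_same_card)
  also have "\<dots> = linked_class_card V T" unfolding linked_class_card_def
    using assms(3) card_subsets_parity[OF finite_edges_meeting[OF assms(1)]] by blast
  finally show ?thesis .
qed

lemma card_linked_class':
  assumes "finite V" "K \<in> graphs_on V" "edges_meeting V T \<noteq> {}"
  shows "card {G. (G, K) \<in> linked V T} = linked_class_card V T"
proof -
  have "{G. (G, K) \<in> linked V T} = {G. (K, G) \<in> linked V T}" using linked_sym by blast
  then show ?thesis using card_linked_class[OF assms] by simp
qed


subsection \<open>Subadditivity of the escape weight\<close>

definition escapes :: "'a set \<Rightarrow> 'a set \<Rightarrow> ('a set set \<times> 'a set set) set" where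
  "escapes V T = {(G, K) \<in> linked V T. G \<in> non_ed V \<and> K \<notin> non_ed V}"

definition escape_weight :: "'a set \<Rightarrow> 'a set \<Rightarrow> real" where
  "escape_weight V T = real (card (escapes V T)) / real (linked_class_card V T)"

lemma card_linked_midpoints:
  assumes "finite V" "T \<subseteq> V" "T \<noteq> {}" "w \<in> V" "w \<notin> T" "(G, K) \<in> linked V (insert w T)"
  shows "2 ^ (card T - 1) \<le> card {H. (G, H) \<in> linked V T \<and> (H, K) \<in> linked V {w}}"
proof -
  define sT sw where "sT = edges_meeting V T" and "sw = edges_meeting V {w}"
  define C where "C = sT \<inter> sw"
  \<comment> \<open>a midpoint H agrees with K on sT - C, with G on the rest outside C, and is free on C
    up to parity\<close>
  define H0 where "H0 = (G \<inter> (sw - C)) \<union> (K \<inter> (sT - C)) \<union> (G - sT - sw)"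
  define k where "k = card G + card H0"
  have fE: "finite (all_edges V)" using assms(1) by (rule finite_all_edges)
  have sub: "sT \<subseteq> all_edges V" "sw \<subseteq> all_edges V" using edges_meeting_subset sT_def sw_def by auto
  have GK: "G \<subseteq> all_edges V" "K \<subseteq> all_edges V" "G - (sT \<union> sw) = K - (sT \<union> sw)" "even (card G + card K)"
    using assms(6) by (simp_all add: linked_def graphs_on_eq_Pow edges_meeting_insert[of V w T] sT_def sw_def)
  have H0E: "H0 \<subseteq> all_edges V" using GK H0_def by blast
  have fC: "finite C" using sub(1) fE C_def by (metis finite_Int finite_subset)
  have cardC: "card C = card T" using card_edges_meeting_Int[OF assms(2,4,5)] C_def sT_def sw_def by simp
  obtain t where "t \<in> T" using assms(3) by blast
  then have tC: "{t, w} \<in> C" using edges_meeting_Int[OF assms(2,4,5)] C_def sT_def sw_def by blast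
  let ?Ys = "{Y. Y \<subseteq> C \<and> even (card Y + k)}"
  have "inj_on (\<lambda>Y. H0 \<union> Y) ?Ys"
  proof (rule inj_onI)
    fix Y1 Y2 assume "Y1 \<in> ?Ys" "Y2 \<in> ?Ys" "H0 \<union> Y1 = H0 \<union> Y2"
    moreover have "H0 \<inter> C = {}" using H0_def C_def by blast
    ultimately show "Y1 = Y2" by blast
  qed
  moreover have "(\<lambda>Y. H0 \<union> Y) ` ?Ys \<subseteq> {H. (G, H) \<in> linked V T \<and> (H, K) \<in> linked V {w}}"
  proof
    fix H assume "H \<in> (\<lambda>Y. H0 \<union> Y) ` ?Ys"
    then obtain Y where Y: "Y \<subseteq> C" "even (card Y + k)" "H = H0 \<union> Y" by blast
    have HE: "H \<subseteq> all_edges V" using Y H0E C_def sub by blast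
    have "finite H0" using H0E fE by (rule finite_subset)
    moreover have "finite Y" using Y(1) fC by (rule finite_subset)
    moreover have "H0 \<inter> Y = {}" using Y(1) H0_def C_def by blast
    ultimately have "card H = card H0 + card Y" using Y by (simp add: card_Un_disjoint)
    then have e1: "even (card G + card H)" using Y(2) k_def by auto
    then have e2: "even (card H + card K)" using GK(4) by presburger
    have "G - sT = H - sT" using Y H0_def C_def by blast
    moreover have "H - sw = K - sw" using Y H0_def C_def GK(3) by blast
    ultimately show "H \<in> {H. (G, H) \<in> linked V T \<and> (H, K) \<in> linked V {w}}"
      using HE GK(1,2) e1 e2 unfolding linked_def graphs_on_eq_Pow sT_def sw_def by simp
  qed
  moreover have "finite {H. (G, H) \<in> linked V T \<and> (H, K) \<in> linked V {w}}"
    by (rule finite_subset[of _ "graphs_on V"]) (auto simp: linked_def finite_graphs_on[OF assms(1)])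
  ultimately have "card ?Ys \<le> card {H. (G, H) \<in> linked V T \<and> (H, K) \<in> linked V {w}}"
    by (rule card_inj_on_le)
  moreover have "card ?Ys = 2 ^ (card T - 1)" using card_subsets_parity[OF fC tC] cardC by simp
  ultimately show ?thesis by simp
qed

lemma card_linked_extensions_right:
  assumes "finite V" "P \<subseteq> linked V T" "edges_meeting V U \<noteq> {}"
  shows "card {(G, H, K). (G, H) \<in> P \<and> (H, K) \<in> linked V U} = card P * linked_class_card V U"
proof (rule card_eq_by_fibres[where f = "\<lambda>(G, H, K). (G, H)"])
  have "finite (graphs_on V \<times> graphs_on V \<times> graphs_on V)" using finite_graphs_on[OF assms(1)] by simp
  then show "finite {(G, H, K). (G, H) \<in> P \<and> (H, K) \<in> linked V U}"
    by (rule finite_subset[rotated]) (use assms(2) in \<open>auto simp: linked_def\<close>)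
  show "finite P" using assms(2) finite_linked[OF assms(1)] by (rule finite_subset)
  fix p assume "p \<in> P"
  then obtain G H where p: "p = (G, H)" "(G, H) \<in> P" by (cases p) auto
  then have H: "H \<in> graphs_on V" using assms(2) by (auto simp: linked_def)
  have "{b \<in> {(G, H, K). (G, H) \<in> P \<and> (H, K) \<in> linked V U}. (\<lambda>(G, H, K). (G, H)) b = p}
      = Pair G ` Pair H ` {K. (H, K) \<in> linked V U}" using p by auto
  then show "card {b \<in> {(G, H, K). (G, H) \<in> P \<and> (H, K) \<in> linked V U}. (\<lambda>(G, H, K). (G, H)) b = p}
      = linked_class_card V U"
    using card_linked_class[OF assms(1) H assms(3)] by (simp add: card_Pair_image)
qed auto

lemma card_linked_extensions_left:
  assumes "finite V" "P \<subseteq> linked V T" "edges_meeting V U \<noteq> {}"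
  shows "card {(G, H, K). (H, K) \<in> P \<and> (G, H) \<in> linked V U} = card P * linked_class_card V U"
proof (rule card_eq_by_fibres[where f = "\<lambda>(G, H, K). (H, K)"])
  have "finite (graphs_on V \<times> graphs_on V \<times> graphs_on V)" using finite_graphs_on[OF assms(1)] by simp
  then show "finite {(G, H, K). (H, K) \<in> P \<and> (G, H) \<in> linked V U}"
    by (rule finite_subset[rotated]) (use assms(2) in \<open>auto simp: linked_def\<close>)
  show "finite P" using assms(2) finite_linked[OF assms(1)] by (rule finite_subset)
  fix p assume "p \<in> P"
  then obtain H K where p: "p = (H, K)" "(H, K) \<in> P" by (cases p) auto
  then have H: "H \<in> graphs_on V" using assms(2) by (auto simp: linked_def)
  have "{b \<in> {(G, H, K). (H, K) \<in> P \<and> (G, H) \<in> linked V U}. (\<lambda>(G, H, K). (H, K)) b = p}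
      = (\<lambda>G. (G, H, K)) ` {G. (G, H) \<in> linked V U}"
  proof (intro equalityI subsetI)
    fix b assume b: "b \<in> {b \<in> {(G, H, K). (H, K) \<in> P \<and> (G, H) \<in> linked V U}. (\<lambda>(G, H, K). (H, K)) b = p}"
    obtain x y z where xyz: "b = (x, y, z)" by (cases b)
    then have "y = H" "z = K" "(x, y) \<in> linked V U" using b p(1) by auto
    then show "b \<in> (\<lambda>G. (G, H, K)) ` {G. (G, H) \<in> linked V U}" using xyz by simp
  qed (use p in auto)
  moreover have "card ((\<lambda>G. (G, H, K)) ` {G. (G, H) \<in> linked V U}) = card {G. (G, H) \<in> linked V U}"
    by (rule card_image) (simp add: inj_on_def)
  ultimately show "card {b \<in> {(G, H, K). (H, K) \<in> P \<and> (G, H) \<in> linked V U}. (\<lambda>(G, H, K). (H, K)) b = p}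
      = linked_class_card V U"
    using card_linked_class'[OF assms(1) H assms(3)] by simp
qed auto

lemma card_escapes_insert_le:
  assumes "finite V" "T \<subseteq> V" "T \<noteq> {}" "w \<in> V" "w \<notin> T"
  shows "card (escapes V (insert w T)) * 2 ^ (card T - 1)
    \<le> card (escapes V T) * linked_class_card V {w} + card (escapes V {w}) * linked_class_card V T"
proof -
  obtain t where "t \<in> T" using assms(3) by blast
  then have ne: "edges_meeting V T \<noteq> {}" "edges_meeting V {w} \<noteq> {}"
    using edges_meeting_Int[OF assms(2,4,5)] by blast+
  have esc: "escapes V U \<subseteq> linked V U" for U by (auto simp: escapes_def)
  \<comment> \<open>on a path G \<rightarrow> H \<rightarrow> K from non-even-degenerate to even-degenerate one of the two steps escapes\<close>
  define Paths where "Paths = {(G, H, K). (G, H) \<in> linked V T \<and> (H, K) \<in> linked V {w}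
    \<and> G \<in> non_ed V \<and> K \<notin> non_ed V}"
  define Paths1 where "Paths1 = {(G, H, K). (G, H) \<in> escapes V T \<and> (H, K) \<in> linked V {w}}"
  define Paths2 where "Paths2 = {(G, H, K). (H, K) \<in> escapes V {w} \<and> (G, H) \<in> linked V T}"
  have fG: "finite (graphs_on V \<times> graphs_on V \<times> graphs_on V)" using finite_graphs_on[OF assms(1)] by simp
  have "finite Paths1" "finite Paths2"
    by (rule finite_subset[OF _ fG], auto simp: Paths1_def Paths2_def escapes_def linked_def)+
  moreover have "Paths \<subseteq> Paths1 \<union> Paths2" by (auto simp: Paths_def Paths1_def Paths2_def escapes_def)
  ultimately have "card Paths \<le> card Paths1 + card Paths2"
    by (meson card_Un_le card_mono finite_UnI le_trans)
  moreover have "card Paths1 = card (escapes V T) * linked_class_card V {w}"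
    unfolding Paths1_def by (rule card_linked_extensions_right[OF assms(1) esc ne(2)])
  moreover have "card Paths2 = card (escapes V {w}) * linked_class_card V T"
    unfolding Paths2_def by (rule card_linked_extensions_left[OF assms(1) esc ne(1)])
  moreover have "card (escapes V (insert w T)) * 2 ^ (card T - 1) \<le> card Paths"
  proof (rule card_ge_by_fibres[where f = "\<lambda>(G, H, K). (G, K)"])
    show "finite Paths" by (rule finite_subset[OF _ fG]) (auto simp: Paths_def linked_def)
    show "finite (escapes V (insert w T))"
      using finite_linked[OF assms(1)] esc by (rule finite_subset[rotated])
    fix p assume "p \<in> escapes V (insert w T)"
    then obtain G K where p: "p = (G, K)" "(G, K) \<in> linked V (insert w T)" "G \<in> non_ed V" "K \<notin> non_ed V"
      by (auto simp: escapes_def)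
    have "{b \<in> Paths. (\<lambda>(G, H, K). (G, K)) b = p}
        = (\<lambda>H. (G, H, K)) ` {H. (G, H) \<in> linked V T \<and> (H, K) \<in> linked V {w}}"
      using p by (auto simp: Paths_def)
    moreover have "card ((\<lambda>H. (G, H, K)) ` {H. (G, H) \<in> linked V T \<and> (H, K) \<in> linked V {w}})
        = card {H. (G, H) \<in> linked V T \<and> (H, K) \<in> linked V {w}}"
      by (rule card_image) (simp add: inj_on_def)
    ultimately show "2 ^ (card T - 1) \<le> card {b \<in> Paths. (\<lambda>(G, H, K). (G, K)) b = p}"
      using card_linked_midpoints[OF assms p(2)] by simp
  qed
  ultimately show ?thesis by linarith
qed

lemma linked_class_card_insert:
  assumes "finite V" "T \<subseteq> V" "T \<noteq> {}" "w \<in> V" "w \<notin> T"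
  shows "2 ^ (card T - 1) * linked_class_card V (insert w T) = linked_class_card V T * linked_class_card V {w}"
proof -
  define a b where "a = card (edges_meeting V T)" and "b = card (edges_meeting V {w})"
  have fin: "finite (edges_meeting V T)" "finite (edges_meeting V {w})"
    using finite_edges_meeting[OF assms(1)] by auto
  have "card (edges_meeting V (insert w T)) + card T = a + b"
    using card_Un_Int[OF fin] card_edges_meeting_Int[OF assms(2,4,5)]
    by (simp add: a_def b_def edges_meeting_insert[of V w T])
  moreover have "1 \<le> card T" using assms(2,3) finite_subset[OF assms(2,1)] by (simp add: Suc_leI card_gt_0_iff)
  moreover have "card T \<le> a" "card T \<le> b"
    unfolding a_def b_def using card_edges_meeting_Int[OF assms(2,4,5)] fin
    by (metis card_mono inf_le1 inf_le2)+
  ultimately have "(card T - 1) + (card (edges_meeting V (insert w T)) - 1) = (a - 1) + (b - 1)"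
    by arith
  then show ?thesis by (simp add: linked_class_card_def a_def b_def flip: power_add)
qed

lemma escape_weight_insert_le:
  assumes "finite V" "T \<subseteq> V" "T \<noteq> {}" "w \<in> V" "w \<notin> T"
  shows "escape_weight V (insert w T) \<le> escape_weight V T + escape_weight V {w}"
proof -
  define M where "M = (2::nat) ^ (card T - 1)"
  define mT mw mwT where "mT = linked_class_card V T" and "mw = linked_class_card V {w}"
    and "mwT = linked_class_card V (insert w T)"
  define x xT xw where "x = card (escapes V (insert w T))" and "xT = card (escapes V T)"
    and "xw = card (escapes V {w})"
  have pos: "real M > 0" "real mT > 0" "real mw > 0" "real mwT > 0"
    by (simp_all add: M_def mT_def mw_def mwT_def linked_class_card_def)
  have "x * M \<le> xT * mw + xw * mT"
    using card_escapes_insert_le[OF assms] by (simp add: x_def xT_def xw_def M_def mT_def mw_def)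
  then have bound: "real x * real M \<le> real xT * real mw + real xw * real mT"
    by (metis of_nat_add of_nat_le_iff of_nat_mult)
  have "real M * real mwT = real mT * real mw"
    using linked_class_card_insert[OF assms] unfolding M_def mT_def mw_def mwT_def
    by (metis of_nat_mult)
  then have "escape_weight V (insert w T) = real x * real M / (real mT * real mw)"
    using pos by (simp add: escape_weight_def x_def mwT_def[symmetric] field_simps)
  also have "\<dots> \<le> (real xT * real mw + real xw * real mT) / (real mT * real mw)"
    using bound pos by (intro divide_right_mono) simp_all
  also have "\<dots> = escape_weight V T + escape_weight V {w}"
    using pos by (simp add: escape_weight_def xT_def xw_def mT_def mw_def field_simps)
  finally show ?thesis .
qed

lemma escape_weight_le_sum:
  assumes "finite V" "T \<subseteq> V" "T \<noteq> {}"
  shows "escape_weight V T \<le> (\<Sum>w\<in>T. escape_weight V {w})"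
proof -
  have "finite T" using assms(2,1) by (rule finite_subset)
  then show ?thesis using assms(3,2)
  proof (induction T rule: finite_ne_induct)
    case (insert x F)
    then have "escape_weight V (insert x F) \<le> escape_weight V F + escape_weight V {x}"
      using escape_weight_insert_le[OF assms(1)] by simp
    then show ?case using insert by simp
  qed simp
qed


subsection \<open>Single vertices and the whole vertex set\<close>

definition non_ed_ratio :: "'a set \<Rightarrow> real" where
  "non_ed_ratio V = real (card (non_ed V)) / real (card (graphs_on V))"

lemma parity_linked_space_eq_linked: "parity_linked_space V V (V - {w}) = linked V {w}"
proof -
  have "induced G (V - {w}) = G - edges_meeting V {w}" if "G \<in> graphs_on V" for G
    using that by (auto simp: induced_def edges_meeting_def graphs_on_eq_Pow all_edges_def)
  then show ?thesis by (auto simp: parity_linked_space_def linked_def)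
qed

lemma card_linked_from:
  assumes "finite V" "A \<subseteq> graphs_on V" "edges_meeting V T \<noteq> {}"
  shows "card {(G, K) \<in> linked V T. G \<in> A} = card A * linked_class_card V T"
proof (rule card_eq_by_fibres[where f = fst])
  show "finite {(G, K) \<in> linked V T. G \<in> A}"
    using finite_linked[OF assms(1)] by (rule finite_subset[rotated]) auto
  show "finite A" using assms(2) finite_graphs_on[OF assms(1)] by (rule finite_subset)
  fix G assume "G \<in> A"
  then have "{b \<in> {(G, K) \<in> linked V T. G \<in> A}. fst b = G} = Pair G ` {K. (G, K) \<in> linked V T}"
    by auto
  then show "card {b \<in> {(G, K) \<in> linked V T. G \<in> A}. fst b = G} = linked_class_card V T"
    using card_linked_class[OF assms(1) _ assms(3)] assms(2) \<open>G \<in> A\<close>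
    by (auto simp: card_Pair_image)
qed auto

lemma escape_weight_single:
  assumes "finite V" "edges_meeting V {w} \<noteq> {}"
  shows "escape_weight V {w} = real (card (graphs_on V)) * (non_ed_ratio V - b_star_prob V V (V - {w}))"
proof -
  define m g where "m = linked_class_card V {w}" and "g = card (graphs_on V)"
  define Both where "Both = {(G, K) \<in> linked V {w}. G \<in> non_ed V \<and> K \<in> non_ed V}"
  have sub: "non_ed V \<subseteq> graphs_on V" by (auto simp: non_ed_def)
  have fin: "finite (escapes V {w})" "finite Both"
    by (rule finite_subset[OF _ finite_linked[OF assms(1)]], auto simp: escapes_def Both_def)+
  have "{(G, K) \<in> linked V {w}. G \<in> non_ed V} = escapes V {w} \<union> Both"
    "escapes V {w} \<inter> Both = {}" by (auto simp: escapes_def Both_def)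
  then have "card (escapes V {w}) + card Both = card (non_ed V) * m"
    using card_linked_from[OF assms(1) sub assms(2)] fin by (simp add: m_def card_Un_disjoint)
  then have split: "real (card (escapes V {w})) = real (card (non_ed V)) * real m - real (card Both)"
    by (metis add_diff_cancel_right' of_nat_add of_nat_mult)
  have b: "b_star_prob V V (V - {w}) = real (card Both) / (real g * real m)"
  proof -
    have "{(G, G') \<in> parity_linked_space V V (V - {w}). \<not> even_degenerate V G \<and> \<not> even_degenerate V G'} = Both"
      by (auto simp: parity_linked_space_eq_linked Both_def non_ed_def linked_def)
    moreover have "card (linked V {w}) = g * m"
    proof -
      have "{(G, K) \<in> linked V {w}. G \<in> graphs_on V} = linked V {w}" by (auto simp: linked_def)
      then show ?thesis using card_linked_from[OF assms(1) subset_refl assms(2)] by (simp add: g_def m_def)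
    qed
    ultimately show ?thesis by (simp add: b_star_prob_def parity_linked_space_eq_linked)
  qed
  have "real m > 0" "real g > 0"
    using finite_graphs_on[OF assms(1)] by (auto simp: m_def g_def linked_class_card_def card_gt_0_iff graphs_on_def)
  then show ?thesis
    unfolding escape_weight_def non_ed_ratio_def m_def[symmetric] g_def[symmetric] split b
    by (simp add: field_simps)
qed

lemma card_graphs_on_eq_linked_class_card:
  assumes "finite V" "all_edges V \<noteq> {}"
  shows "card (graphs_on V) = 2 * linked_class_card V V"
proof -
  have "card (all_edges V) \<noteq> 0" using assms(2) finite_all_edges[OF assms(1)] by simp
  then have "(2::nat) ^ card (all_edges V) = 2 * 2 ^ (card (all_edges V) - 1)"
    by (cases "card (all_edges V)") simp_all
  then show ?thesis using finite_all_edges[OF assms(1)]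
    by (simp add: graphs_on_eq_Pow card_Pow linked_class_card_def edges_meeting_all)
qed

lemma escape_weight_all_ge:
  assumes "finite V" "all_edges V \<noteq> {}"
  shows "real (card (graphs_on V)) * non_ed_ratio V * (1 - 2 * non_ed_ratio V) \<le> escape_weight V V"
proof -
  define a m where "a = card (non_ed V)" and "m = linked_class_card V V"
  have ne: "edges_meeting V V \<noteq> {}" using assms(2) by (simp add: edges_meeting_all)
  have g: "card (graphs_on V) = 2 * m" using card_graphs_on_eq_linked_class_card[OF assms] m_def by simp
  have fin: "finite (non_ed V)"
    using finite_graphs_on[OF assms(1)] by (rule finite_subset[rotated]) (auto simp: non_ed_def)
  \<comment> \<open>V-linked graphs only share their parity, so at most a of the m graphs linked to G are non-even-degenerate\<close>
  have "a * (m - a) \<le> card (escapes V V)"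
    unfolding escapes_def a_def
  proof (rule card_ge_by_fibres[where f = fst])
    show "finite {(G, K) \<in> linked V V. G \<in> non_ed V \<and> K \<notin> non_ed V}"
      using finite_linked[OF assms(1)] by (rule finite_subset[rotated]) auto
    fix G assume G: "G \<in> non_ed V"
    then have "{b \<in> {(G, K) \<in> linked V V. G \<in> non_ed V \<and> K \<notin> non_ed V}. fst b = G}
        = Pair G ` ({K. (G, K) \<in> linked V V} - non_ed V)" by auto
    moreover have "card {K. (G, K) \<in> linked V V} = m"
      using card_linked_class[OF assms(1) _ ne] G m_def by (auto simp: non_ed_def)
    ultimately show "m - card (non_ed V) \<le> card {b \<in> {(G, K) \<in> linked V V. G \<in> non_ed V \<and> K \<notin> non_ed V}. fst b = G}"
      using diff_card_le_card_Diff[OF fin, of "{K. (G, K) \<in> linked V V}"] by (simp add: card_Pair_image)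
  qed (rule fin)
  then have "real a * (real m - real a) \<le> real (card (escapes V V))"
  proof (cases "a \<le> m")
    case True
    then have "real a * (real m - real a) = real (a * (m - a))" by (simp add: of_nat_diff)
    then show ?thesis using \<open>a * (m - a) \<le> card (escapes V V)\<close> by (metis of_nat_le_iff)
  next
    case False
    then have "real a * (real m - real a) \<le> 0" by (simp add: mult_nonneg_nonpos)
    then show ?thesis by (meson of_nat_0_le_iff order_trans)
  qed
  moreover have "real m > 0" by (simp add: m_def linked_class_card_def)
  ultimately have "real a * (real m - real a) / real m \<le> escape_weight V V"
    unfolding escape_weight_def m_def by (simp add: divide_right_mono)
  moreover have "real (card (graphs_on V)) * non_ed_ratio V * (1 - 2 * non_ed_ratio V)
      = real a * (real m - real a) / real m"
    using \<open>real m > 0\<close> by (simp add: non_ed_ratio_def g a_def field_simps)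
  ultimately show ?thesis by simp
qed

lemma b_star_prob_bound:
  assumes "finite V" "card V = n" "n \<ge> 2" "\<And>w. w \<in> V \<Longrightarrow> b_star_prob V V (V - {w}) = b"
  shows "b \<le> non_ed_ratio V - non_ed_ratio V * (1 - 2 * non_ed_ratio V) / real n"
proof -
  define c g where "c = non_ed_ratio V" and "g = real (card (graphs_on V))"
  have single: "edges_meeting V {w} \<noteq> {}" if "w \<in> V" for w
  proof -
    have "card (V - {w}) \<noteq> 0" using assms(1-3) that by simp
    then obtain u where "u \<in> V - {w}" by (metis all_not_in_conv card.empty)
    then show ?thesis using edges_meeting_nonempty[of u V w] that by blast
  qed
  have "V \<noteq> {}" using assms(2,3) by auto
  then obtain w where "w \<in> V" by blast
  then have "all_edges V \<noteq> {}" using single[of w] edges_meeting_subset[of V "{w}"] by auto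
  then have "g * c * (1 - 2 * c) \<le> escape_weight V V"
    using escape_weight_all_ge[OF assms(1)] c_def g_def by blast
  also have "\<dots> \<le> (\<Sum>w\<in>V. escape_weight V {w})"
    using escape_weight_le_sum[OF assms(1) subset_refl \<open>V \<noteq> {}\<close>] .
  also have "\<dots> = (\<Sum>w\<in>V. g * (c - b))"
    using escape_weight_single[OF assms(1) single] assms(4) c_def g_def by (intro sum.cong) simp_all
  also have "\<dots> = real n * (g * (c - b))" using assms(2) by simp
  finally have "g * (c * (1 - 2 * c)) \<le> g * (real n * (c - b))" by (simp add: algebra_simps)
  moreover have "g > 0" using finite_graphs_on[OF assms(1)] by (auto simp: g_def card_gt_0_iff graphs_on_def)
  ultimately have "c * (1 - 2 * c) \<le> real n * (c - b)" by simp
  moreover have "real n > 0" using assms(3) by simp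
  ultimately have "c * (1 - 2 * c) / real n \<le> c - b" by (simp add: divide_le_eq mult.commute)
  then show ?thesis unfolding c_def by linarith
qed

lemma c_prob_eq_non_ed_ratio:
  assumes "finite V" "card V = n"
  shows "c_prob n = non_ed_ratio V"
proof -
  obtain h where h: "bij_betw h {..<n} V"
    using ex_bij_betw_nat_finite[OF assms(1)] assms(2) by (auto simp: atLeast0LessThan)
  show ?thesis
    unfolding c_prob_def non_ed_ratio_def non_ed_def[symmetric]
    using card_non_ed_relabel[OF h] bij_betw_same_card[OF bij_betw_relabel[OF h]] by simp
qed

lemma b_star_prob_eq_complement:
  assumes "finite V" "S \<subseteq> V \<inter> V'" "card V = card S + 1" "card V' = card S + 1" "w \<in> V"
  shows "b_star_prob V V (V - {w}) = b_star_prob V V' S"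
proof -
  have fS: "finite S" using assms(1,2) finite_subset by blast
  obtain v where v: "V - S = {v}"
    using card_Diff_subset[OF fS] assms(2,3) by (metis card_1_singletonE diff_add_inverse le_infE)
  obtain v' where v': "V' - S = {v'}"
    using card_Diff_subset[OF fS] assms(2,4) by (metis card_1_singletonE diff_add_inverse le_infE)
  have V: "V = insert v S" "v \<notin> S" "V' = insert v' S" "v' \<notin> S" using v v' assms(2) by auto
  \<comment> \<open>first identify V' with V by renaming v' to v, then move the missing vertex from v to w\<close>
  define f where "f = (\<lambda>x. if x = v' then v else x)"
  have "bij_betw f V' V" unfolding bij_betw_def inj_on_def f_def using V by auto
  then have "b_star_prob V V' S = b_star_prob V V S"
    using b_star_prob_relabel[OF bij_betw_id _ assms(2)] V f_def by fastforce
  define t where "t = (\<lambda>x. if x = v then w else if x = w then v else x)"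
  have t: "bij_betw t V V" unfolding bij_betw_def inj_on_def t_def using V assms(5) by auto
  have "t ` S = V - {w}"
  proof (cases "w = v")
    case False
    then have "w \<in> S" using assms(5) V by auto
    then show ?thesis using V False by (auto simp: t_def image_iff)
  qed (use V in \<open>auto simp: t_def\<close>)
  moreover have "b_star_prob V V S = b_star_prob V V (t ` S)"
    using b_star_prob_relabel[OF t t, of S] assms(2) by auto
  ultimately show ?thesis using \<open>b_star_prob V V' S = b_star_prob V V S\<close> by simp
qed

theorem mainTheorem16:
  fixes n :: nat and V V' S :: "'a set"
  assumes "n \<ge> 2"
    and "finite V" and "finite V'"
    and "card V = 1 + (n - 1)" and "card V' = 1 + (n - 1)"
    and "S \<subseteq> V \<inter> V'" and "card S = n - 1"
  shows "b_star_prob V V' S \<le> c_prob n - c_prob n * (1 - 2 * c_prob n) / real n"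
proof -
  have "card V = n" "card V = card S + 1" "card V' = card S + 1" using assms(1,4,5,7) by auto
  then have "b_star_prob V V (V - {w}) = b_star_prob V V' S" if "w \<in> V" for w
    using b_star_prob_eq_complement[OF assms(2,6)] that by blast
  then show ?thesis
    using b_star_prob_bound[OF assms(2) \<open>card V = n\<close> assms(1)]
      c_prob_eq_non_ed_ratio[OF assms(2) \<open>card V = n\<close>] by simp
qed

end
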